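(* Let $q=3^\alpha$ where $\alpha\geq 3$ is odd. Then there exists a finite group $H$ such that $O_3(H)\neq 1$ and $\mu(H)=\{6,9,q-1,(q+1)/2\}$.
   Context: For a finite group $X$, $\omega(X)$ is the set of orders of elements of $X$, and $\mu(X)$ is the set of elements of $\omega(X)$ maximal with respect to divisibility. $O_3(X)$ is the largest normal $3$-subgroup of $X$. *)

theory Defs
  imports "HOL-Algebra.Algebra"
begin

definition elem_orders :: "('a, 'b) monoid_scheme \<Rightarrow> nat set" where
  "elem_orders G = group.ord G ` carrier G"

definition max_orders :: "('a, 'b) monoid_scheme \<Rightarrow> nat set" where
  "max_orders G = {n \<in> elem_orders G. \<forall>m \<in> elem_orders G. n dvd m \<longrightarrow> m = n}"

definition normal_p_subgroup :: "nat \<Rightarrow> 'a set \<Rightarrow> ('a, 'b) monoid_scheme \<Rightarrow> bool" where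
  "normal_p_subgroup p N G \<longleftrightarrow> N \<lhd> G \<and> (\<exists>k. card N = p ^ k)"

text \<open>O_p(G): the largest normal p-subgroup, i.e. the subgroup generated by all
  normal p-subgroups (for finite G this is itself a normal p-subgroup).\<close>
definition O_p :: "nat \<Rightarrow> ('a, 'b) monoid_scheme \<Rightarrow> 'a set" where
  "O_p p G = generate G (\<Union> {N. normal_p_subgroup p N G})"

end

(*
  The group is H = V x| G, where V is the additive group of 2 x 2 matrices over F_q, an
  elementary abelian normal 3-subgroup, and G = {1, -1} x SL_2(q) acts by P |-> e A P (A^(3))^T,
  where A^(3) is A with its entries cubed; this is the action on the tensor product of the
  natural module with its Frobenius twist.

  Let x = (P, e A) and t = tr A. If t^2 = 1 then A^3 = -t, so x^9 = 1 for e = 1 and x^6 = 1 for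
  e = -1; if t = 0 then A^2 = -1 and x^6 = 1. A nonzero fixed point of e A forces t = e t^3, so
  in the remaining cases e A acts fixed-point-freely (-1 is not a square in F_q as q = 3 mod 4),
  and x^n = 1 as soon as (e A)^n = 1. There the eigenvalues l, 1/l of A are distinct and the
  Frobenius map either fixes or swaps them, which gives A^(q-1) = 1 or A^((q+1)/2) = +-1.
  Explicit elements of orders 6, 9, q - 1 and (q + 1)/2 exist, and no one of these four numbers
  divides another.
*)

theory Submission
  imports Defs "HOL-Algebra.Algebraic_Closure_Type"
begin

section \<open>Fixed points of the Frobenius map\<close>

lemma power_char_power_diff:
  fixes x y :: "'a :: comm_ring_prime_char"
  assumes "m = CHAR('a) ^ n"
  shows "(x - y) ^ m = x ^ m - y ^ m"
proof -
  have "x ^ m = ((x - y) + y) ^ m" by simp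
  also have "\<dots> = (x - y) ^ m + y ^ m" using assms by (intro freshmans_dream') simp_all
  finally show ?thesis by simp
qed

lemma card_roots_rsquarefree:
  fixes p :: "'a :: alg_closed_field poly"
  assumes "rsquarefree p"
  shows "card {x. poly p x = 0} = degree p"
  using assms
proof (induction "degree p" arbitrary: p rule: less_induct)
  case (less p)
  have p0: "p \<noteq> 0" using less.prems by (simp add: rsquarefree_def)
  show ?case
  proof (cases "degree p = 0")
    case True
    then obtain c where "p = [:c:]" by (metis degree_eq_zeroE)
    with p0 True show ?thesis by simp
  next
    case False
    then obtain x where "poly p x = 0" using alg_closed_imp_poly_has_root by blast
    then obtain r where pr: "p = [:-x, 1:] * r" using poly_eq_0_iff_dvd by (blast elim: dvdE)
    have r0: "r \<noteq> 0" using p0 pr by auto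
    have deg: "degree p = Suc (degree r)" unfolding pr using r0 by (subst degree_mult_eq) auto
    have order_p: "order a p = order a [:-x, 1:] + order a r" for a
      using order_mult[of "[:-x, 1:]" r a] p0 pr by simp
    have "rsquarefree r"
      unfolding rsquarefree_def
    proof (intro conjI allI r0)
      fix a
      have "order a p = 0 \<or> order a p = 1" using less.prems by (simp add: rsquarefree_def)
      thus "order a r = 0 \<or> order a r = 1" using order_p[of a] by auto
    qed
    moreover have "poly r x \<noteq> 0"
    proof
      assume "poly r x = 0"
      hence "order x r \<noteq> 0" using r0 order_root by blast
      moreover have "order x [:-x, 1:] = 1" using order_power_n_n[of x 1] by simp
      moreover have "order x p = 0 \<or> order x p = 1" using less.prems by (simp add: rsquarefree_def)
      ultimately show False using order_p[of x] by linarith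
    qed
    moreover have "{y. poly p y = 0} = insert x {y. poly r y = 0}" using pr by auto
    ultimately show ?thesis
      using less.hyps[of r] deg poly_roots_finite[OF r0] by simp
  qed
qed

lemma rsquarefree_if_pderiv_no_roots:
  fixes p :: "'a :: idom poly"
  assumes "p \<noteq> 0" and "\<And>a. poly (pderiv p) a \<noteq> 0"
  shows "rsquarefree p"
  unfolding rsquarefree_def
proof (intro conjI allI assms(1))
  fix a
  show "order a p = 0 \<or> order a p = 1"
  proof (rule ccontr)
    assume "\<not> (order a p = 0 \<or> order a p = 1)"
    hence "[:-a, 1:] ^ 2 dvd [:-a, 1:] ^ order a p" by (intro le_imp_power_dvd) auto
    also have "\<dots> dvd p" by (rule order_1)
    finally obtain r where p: "p = [:-a, 1:] ^ Suc 1 * r" by (auto simp: numeral_2_eq_2 elim: dvdE)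
    have "pderiv p = smult (of_nat (Suc 1)) [:-a, 1:] * pderiv [:-a, 1:] * r + [:-a, 1:] ^ Suc 1 * pderiv r"
      unfolding p pderiv_mult pderiv_power_Suc by simp
    hence "poly (pderiv p) a = 0" by simp
    with assms(2) show False by blast
  qed
qed

lemma card_Frobenius_fixed_points:
  fixes n :: nat
  defines "N \<equiv> CHAR('a :: {alg_closed_field, field_prime_char}) ^ n"
  assumes "n > 0"
  shows "card {x :: 'a. x ^ N = x} = N"
proof -
  have "CHAR('a) \<le> N" unfolding N_def using assms(2) by (simp add: self_le_power Suc_leI)
  hence N2: "N \<ge> 2" using prime_ge_2_nat[OF CHAR_prime[where ?'a='a]] by linarith
  define p :: "'a poly" where "p = monom 1 N - [:0, 1:]"
  have poly_p: "poly p x = x ^ N - x" for x by (simp add: p_def poly_monom)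
  have "degree (monom (1 :: 'a) N + - [:0, 1:]) = N"
    using N2 by (subst degree_add_eq_left) (auto simp: degree_monom_eq)
  hence deg: "degree p = N" unfolding p_def by (metis diff_conv_add_uminus)
  have "(of_nat N :: 'a) = 0" unfolding N_def using assms(2) by (simp add: of_nat_eq_0_iff_char_dvd)
  hence "pderiv p = - 1"
    unfolding p_def by (simp add: pderiv_diff pderiv_monom pderiv_pCons one_pCons)
  hence "rsquarefree p" using deg N2 by (intro rsquarefree_if_pderiv_no_roots) auto
  hence "card {x. poly p x = 0} = N" using card_roots_rsquarefree deg by metis
  thus ?thesis by (simp add: poly_p)
qed

lemma ring_of_type_algebra_simps [simp]:
  "carrier (ring_of_type_algebra :: 'a :: ring_1 ring) = UNIV"
  "x \<otimes>\<^bsub>ring_of_type_algebra\<^esub> y = x * y" "x \<oplus>\<^bsub>ring_of_type_algebra\<^esub> y = x + y"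
  "\<one>\<^bsub>ring_of_type_algebra\<^esub> = 1" "\<zero>\<^bsub>ring_of_type_algebra\<^esub> = 0"
  by (simp_all add: ring_of_type_algebra_def)

lemma Frobenius_fixed_points_subfield:
  assumes "N = CHAR('a :: field_prime_char) ^ n"
  shows "subfield {x :: 'a. x ^ N = x} ring_of_type_algebra"
proof -
  interpret field "ring_of_type_algebra :: 'a ring" by (rule field_from_type_algebra)
  have "N > 0" using assms by simp
  have minus: "(- x) ^ N = - (x ^ N)" for x :: 'a
    using power_char_power_diff[OF assms, of 0 x] \<open>N > 0\<close> by simp
  have inv: "inv\<^bsub>ring_of_type_algebra\<^esub> x = inverse x" if "x \<noteq> 0" for x :: 'a
    using that by (intro comm_inv_char) auto
  have neg: "\<ominus>\<^bsub>ring_of_type_algebra\<^esub> x = - x" for x :: 'a by (rule minus_equality) auto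
  show ?thesis
  proof (rule subfieldI')
    have add: "(x + y) ^ N = x ^ N + y ^ N" for x y :: 'a
      using assms by (intro freshmans_dream') simp_all
    show "subring {x :: 'a. x ^ N = x} ring_of_type_algebra"
      by (rule subringI) (simp_all add: neg minus add power_mult_distrib)
    show "inv\<^bsub>ring_of_type_algebra\<^esub> k \<in> {x. x ^ N = x}"
      if "k \<in> {x :: 'a. x ^ N = x} - {\<zero>\<^bsub>ring_of_type_algebra\<^esub>}" for k
      using that by (simp add: inv power_inverse)
  qed
qed

lemma exists_primitive_Frobenius_fixed_point:
  fixes n :: nat
  defines "N \<equiv> CHAR('a :: {alg_closed_field, field_prime_char}) ^ n"
  assumes "n > 0"
  shows "\<exists>w :: 'a. \<forall>k. w ^ k = 1 \<longleftrightarrow> (N - 1) dvd k"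
proof -
  define F where "F = {x :: 'a. x ^ N = x}"
  define R where "R = (ring_of_type_algebra :: 'a ring)\<lparr>carrier := F\<rparr>"
  have R_simps: "carrier R = F" "\<one>\<^bsub>R\<^esub> = 1" "\<zero>\<^bsub>R\<^esub> = 0" "x \<otimes>\<^bsub>R\<^esub> y = x * y" for x y
    by (simp_all add: R_def ring_of_type_algebra_def)
  interpret ring_of_type_algebra: field "ring_of_type_algebra :: 'a ring"
    by (rule field_from_type_algebra)
  interpret field R
    unfolding R_def F_def
    by (rule ring_of_type_algebra.subfield_iff(2)[OF Frobenius_fixed_points_subfield]) (simp add: N_def)
  have card_F: "card F = N" unfolding F_def N_def using assms(2) by (rule card_Frobenius_fixed_points)
  have "N > 0" unfolding N_def by simp
  hence "finite F" using card_F by (metis card.infinite less_irrefl)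
  hence fin: "finite (carrier R)" by (simp only: R_simps)
  then obtain a where a: "a \<in> carrier (Multiplicative_Group.mult_of R)"
    and gen: "carrier (Multiplicative_Group.mult_of R) = {a [^]\<^bsub>R\<^esub> i | i :: nat. i \<in> UNIV}"
    using finite_field_mult_group_has_gen by auto
  interpret M: group "Multiplicative_Group.mult_of R" by (rule field_mult_group)
  have pow_R: "x [^]\<^bsub>R\<^esub> k = x ^ k" for x and k :: nat
    by (induction k) (simp_all add: R_simps power_commutes)
  have pow_M: "x [^]\<^bsub>Multiplicative_Group.mult_of R\<^esub> k = x ^ k" for x and k :: nat
    by (induction k) (simp_all add: R_simps power_commutes)
  have fin_M: "finite (carrier (Multiplicative_Group.mult_of R))" using fin by (rule finite_mult_of)
  have "M.ord a \<noteq> 0" using M.ord_ge_1[OF fin_M a] by simp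
  hence "generate (Multiplicative_Group.mult_of R) {a} = carrier (Multiplicative_Group.mult_of R)"
    using M.generate_pow_nat[OF a] gen by (simp only: pow_R pow_M) blast
  hence "M.ord a = card (carrier (Multiplicative_Group.mult_of R))"
    using M.generate_pow_card[OF a] by simp
  also have "\<dots> = N - 1"
    using \<open>finite F\<close> card_F \<open>N > 0\<close> by (simp add: R_simps F_def)
  finally have "a ^ k = 1 \<longleftrightarrow> (N - 1) dvd k" for k
    using M.pow_eq_id[OF a, of k] by (simp add: R_simps pow_M)
  thus ?thesis by blast
qed

section \<open>An algebraic closure of the field with three elements\<close>

datatype gf3 = Z0 | Z1 | Z2

lemma gf3_all: "(\<And>x :: gf3. P x) \<equiv> Trueprop (P Z0 \<and> P Z1 \<and> P Z2)"
proof
  assume "\<And>x. P x"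
  then show "P Z0 \<and> P Z1 \<and> P Z2" by auto
next
  fix x
  assume "P Z0 \<and> P Z1 \<and> P Z2"
  then show "P x" by (cases x) auto
qed

instantiation gf3 :: field
begin

fun plus_gf3 where
  "plus_gf3 Z0 y = y" | "plus_gf3 x Z0 = x" | "plus_gf3 Z1 Z1 = Z2" | "plus_gf3 Z1 Z2 = Z0"
| "plus_gf3 Z2 Z1 = Z0" | "plus_gf3 Z2 Z2 = Z1"

fun uminus_gf3 where "uminus_gf3 Z0 = Z0" | "uminus_gf3 Z1 = Z2" | "uminus_gf3 Z2 = Z1"

fun times_gf3 where
  "times_gf3 Z0 y = Z0" | "times_gf3 x Z0 = Z0" | "times_gf3 Z1 y = y" | "times_gf3 x Z1 = x"
| "times_gf3 Z2 Z2 = Z1"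

definition "minus_gf3 x y = x + (- y :: gf3)"
definition "zero_gf3 = Z0"
definition "one_gf3 = Z1"
definition "inverse_gf3 (x :: gf3) = x"
definition "divide_gf3 x y = x * (y :: gf3)"

instance
  apply intro_classes
  apply (unfold gf3_all)
  apply (simp_all add: zero_gf3_def one_gf3_def inverse_gf3_def divide_gf3_def minus_gf3_def)
  apply (case_tac a; simp)
  done

end

lemma CHAR_gf3 [simp]: "CHAR(gf3) = 3"
  by (rule CHAR_eq_posI) (auto simp: zero_gf3_def one_gf3_def numeral_3_eq_3 less_Suc_eq)

instance gf3 :: field_prime_char
  by (rule field_prime_charI') simp

instance alg_closure :: (field_prime_char) field_prime_char
  by (rule field_prime_charI') simp

text \<open>All fields \<open>\<bbbF>\<^sub>q\<close> needed below are realised inside this one type, as the fixed points of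
  \<open>x \<mapsto> x ^ q\<close>.\<close>

type_synonym gf3_closure = "gf3 alg_closure"

lemma CHAR_gf3_closure [simp]: "CHAR(gf3_closure) = 3"
  by simp

lemma numeral_eq_zero_iff_3_dvd [simp]: "(numeral n :: gf3_closure) = 0 \<longleftrightarrow> 3 dvd (numeral n :: nat)"
  by (metis CHAR_gf3_closure of_nat_eq_0_iff_char_dvd of_nat_numeral)

lemma three_eq_zero [simp]: "(3 :: gf3_closure) = 0"
  by simp

lemma two_neq_zero: "(2 :: gf3_closure) \<noteq> 0"
  by simp

lemma minus_one_neq_one: "(- 1 :: gf3_closure) \<noteq> 1"
  using two_neq_zero by (metis add_eq_0_iff2 one_add_one)

lemma minus_one_power_eq_one_iff: "(- 1 :: gf3_closure) ^ n = 1 \<longleftrightarrow> even n"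
  using minus_one_neq_one by (cases "even n") simp_all

lemma exists_eigenvalue_not_pm_one:
  fixes t :: gf3_closure
  assumes "t * t \<noteq> 1"
  obtains l where "l * l - t * l + 1 = 0" and "l * l \<noteq> 1"
proof -
  obtain l where "poly [:1, - t, 1:] l = 0" using alg_closed_imp_poly_has_root[of "[:1, - t, 1:]"] by auto
  hence root: "l * l - t * l + 1 = 0" by (simp add: algebra_simps)
  moreover have "l * l \<noteq> 1"
  proof
    assume "l * l = 1"
    hence "t * l = 2" using root by (simp add: algebra_simps)
    hence "t * t = (t * l) * (t * l)" using \<open>l * l = 1\<close> by (metis mult.assoc mult.commute mult_1_right)
    also have "\<dots> = 3 + 1" using \<open>t * l = 2\<close> by (simp del: three_eq_zero)
    finally show False using assms by simp
  qed
  ultimately show ?thesis by (rule that)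
qed

section \<open>\<open>2 \<times> 2\<close> matrices\<close>

datatype 'a mat2 = Mat2 (m11: 'a) (m12: 'a) (m21: 'a) (m22: 'a)

lemma mat2_eq_iff: "P = Q \<longleftrightarrow> m11 P = m11 Q \<and> m12 P = m12 Q \<and> m21 P = m21 Q \<and> m22 P = m22 Q"
  by (cases P; cases Q) auto

instantiation mat2 :: (comm_ring_1) ring_1
begin

definition "zero_mat2 = Mat2 0 0 0 0"
definition "one_mat2 = Mat2 1 0 0 1"
definition "plus_mat2 P Q = Mat2 (m11 P + m11 Q) (m12 P + m12 Q) (m21 P + m21 Q) (m22 P + m22 Q)"
definition "minus_mat2 P Q = Mat2 (m11 P - m11 Q) (m12 P - m12 Q) (m21 P - m21 Q) (m22 P - m22 Q)"
definition "uminus_mat2 P = Mat2 (- m11 P) (- m12 P) (- m21 P) (- m22 P)"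
definition "times_mat2 P Q =
  Mat2 (m11 P * m11 Q + m12 P * m21 Q) (m11 P * m12 Q + m12 P * m22 Q)
       (m21 P * m11 Q + m22 P * m21 Q) (m21 P * m12 Q + m22 P * m22 Q)"

instance
  by intro_classes
    (simp_all add: mat2_eq_iff zero_mat2_def one_mat2_def plus_mat2_def minus_mat2_def
      uminus_mat2_def times_mat2_def algebra_simps)

end

lemma mat2_sel_ops [simp]:
  "m11 (P + Q) = m11 P + m11 Q" "m12 (P + Q) = m12 P + m12 Q"
  "m21 (P + Q) = m21 P + m21 Q" "m22 (P + Q) = m22 P + m22 Q"
  "m11 (P - Q) = m11 P - m11 Q" "m12 (P - Q) = m12 P - m12 Q"
  "m21 (P - Q) = m21 P - m21 Q" "m22 (P - Q) = m22 P - m22 Q"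
  "m11 (- P) = - m11 P" "m12 (- P) = - m12 P" "m21 (- P) = - m21 P" "m22 (- P) = - m22 P"
  "m11 (P * Q) = m11 P * m11 Q + m12 P * m21 Q" "m12 (P * Q) = m11 P * m12 Q + m12 P * m22 Q"
  "m21 (P * Q) = m21 P * m11 Q + m22 P * m21 Q" "m22 (P * Q) = m21 P * m12 Q + m22 P * m22 Q"
  "m11 0 = 0" "m12 0 = 0" "m21 0 = 0" "m22 0 = 0"
  "m11 1 = 1" "m12 1 = 0" "m21 1 = 0" "m22 1 = 1"
  for P Q :: "'a :: comm_ring_1 mat2"
  by (simp_all add: zero_mat2_def one_mat2_def plus_mat2_def minus_mat2_def uminus_mat2_def
      times_mat2_def)

definition smult_mat2 :: "'a :: times \<Rightarrow> 'a mat2 \<Rightarrow> 'a mat2" where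
  "smult_mat2 s P = Mat2 (s * m11 P) (s * m12 P) (s * m21 P) (s * m22 P)"

definition trace_mat2 :: "'a :: plus mat2 \<Rightarrow> 'a" where
  "trace_mat2 P = m11 P + m22 P"

definition det_mat2 :: "'a :: comm_ring mat2 \<Rightarrow> 'a" where
  "det_mat2 P = m11 P * m22 P - m12 P * m21 P"

definition transpose_mat2 :: "'a mat2 \<Rightarrow> 'a mat2" where
  "transpose_mat2 P = Mat2 (m11 P) (m21 P) (m12 P) (m22 P)"

definition adj_mat2 :: "'a :: uminus mat2 \<Rightarrow> 'a mat2" where
  "adj_mat2 P = Mat2 (m22 P) (- m12 P) (- m21 P) (m11 P)"

lemma mat2_sel_defs [simp]:
  "m11 (smult_mat2 s P) = s * m11 P" "m12 (smult_mat2 s P) = s * m12 P"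
  "m21 (smult_mat2 s P) = s * m21 P" "m22 (smult_mat2 s P) = s * m22 P"
  "m11 (transpose_mat2 P) = m11 P" "m12 (transpose_mat2 P) = m21 P"
  "m21 (transpose_mat2 P) = m12 P" "m22 (transpose_mat2 P) = m22 P"
  "m11 (adj_mat2 P) = m22 P" "m12 (adj_mat2 P) = - m12 P"
  "m21 (adj_mat2 P) = - m21 P" "m22 (adj_mat2 P) = m11 P"
  by (simp_all add: smult_mat2_def transpose_mat2_def adj_mat2_def)

context
  fixes P Q :: "'a :: comm_ring_1 mat2"
begin

lemma smult_mat2_mult_left: "smult_mat2 s P * Q = smult_mat2 s (P * Q)"
  and smult_mat2_mult_right: "P * smult_mat2 s Q = smult_mat2 s (P * Q)"
  and smult_mat2_smult_mat2 [simp]: "smult_mat2 s (smult_mat2 r P) = smult_mat2 (s * r) P"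
  and smult_mat2_add_right: "smult_mat2 s (P + Q) = smult_mat2 s P + smult_mat2 s Q"
  and smult_mat2_diff_right: "smult_mat2 s (P - Q) = smult_mat2 s P - smult_mat2 s Q"
  and smult_mat2_add_left: "smult_mat2 (s + r) P = smult_mat2 s P + smult_mat2 r P"
  and smult_mat2_1 [simp]: "smult_mat2 1 P = P"
  and smult_mat2_0 [simp]: "smult_mat2 0 P = 0" "smult_mat2 s 0 = 0"
  and smult_mat2_minus_1: "smult_mat2 (- 1) P = - P"
  and transpose_mat2_mult: "transpose_mat2 (P * Q) = transpose_mat2 Q * transpose_mat2 P"
  and transpose_mat2_minus: "transpose_mat2 (- P) = - transpose_mat2 P"
  and transpose_mat2_one [simp]: "transpose_mat2 1 = 1"
  and adj_mat2: "P * adj_mat2 P = smult_mat2 (det_mat2 P) 1" "adj_mat2 P * P = smult_mat2 (det_mat2 P) 1"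
  and det_mat2_mult: "det_mat2 (P * Q) = det_mat2 P * det_mat2 Q"
  and det_mat2_one [simp]: "det_mat2 1 = 1"
  and det_mat2_transpose [simp]: "det_mat2 (transpose_mat2 P) = det_mat2 P"
  and det_mat2_adj [simp]: "det_mat2 (adj_mat2 P) = det_mat2 P"
  and det_mat2_smult: "det_mat2 (smult_mat2 s P) = s ^ 2 * det_mat2 P"
  and trace_mat2_add: "trace_mat2 (P + Q) = trace_mat2 P + trace_mat2 Q"
  and trace_mat2_smult: "trace_mat2 (smult_mat2 s P) = s * trace_mat2 P"
  and trace_mat2_transpose [simp]: "trace_mat2 (transpose_mat2 P) = trace_mat2 P"
  and trace_mat2_adj [simp]: "trace_mat2 (adj_mat2 P) = trace_mat2 P"
  by (simp_all add: mat2_eq_iff det_mat2_def trace_mat2_def algebra_simps power2_eq_square)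

lemma Cayley_Hamilton_mat2: "P * P = smult_mat2 (trace_mat2 P) P - smult_mat2 (det_mat2 P) 1"
  by (simp add: mat2_eq_iff trace_mat2_def det_mat2_def algebra_simps)

end

lemma power3_mat2_if_trace_square_one:
  fixes A :: "'a :: comm_ring_1 mat2"
  assumes "det_mat2 A = 1" and "trace_mat2 A * trace_mat2 A = 1"
  shows "A ^ 3 = smult_mat2 (- trace_mat2 A) 1"
proof -
  have AA: "A * A = smult_mat2 (trace_mat2 A) A - 1" using Cayley_Hamilton_mat2[of A] assms(1) by simp
  have "A ^ 3 = A * (A * A)" by (simp add: power3_eq_cube mult.assoc)
  also have "\<dots> = smult_mat2 (trace_mat2 A) (A * A) - A"
    by (simp add: AA right_diff_distrib smult_mat2_mult_right)
  finally show ?thesis using assms(2) by (simp add: AA mat2_eq_iff algebra_simps)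
qed

lemma square_mat2_if_trace_zero:
  fixes A :: "'a :: comm_ring_1 mat2"
  assumes "det_mat2 A = 1" and "trace_mat2 A = 0"
  shows "A * A = - 1"
  using Cayley_Hamilton_mat2[of A] assms by simp

lemma unipotent_mat2_power: "Mat2 1 1 0 1 ^ n = Mat2 1 (of_nat n) 0 (1 :: 'a :: comm_ring_1)"
  by (induction n) (simp_all add: mat2_eq_iff)

lemma diagonal_mat2_power: "Mat2 a 0 0 b ^ n = Mat2 (a ^ n) 0 0 (b ^ n :: 'a :: comm_ring_1)"
  by (induction n) (simp_all add: mat2_eq_iff)

lemma det_mat2_power: "det_mat2 (P ^ n) = det_mat2 P ^ n"
  for P :: "'a :: comm_ring_1 mat2"
  by (induction n) (simp_all add: det_mat2_mult)

lemma trace_mat2_eq_eigenvalue_add_inverse: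
  fixes A :: "'a :: field mat2"
  assumes "l * l - trace_mat2 A * l + 1 = 0"
  shows "trace_mat2 A = l + inverse l"
proof -
  have "l \<noteq> 0" using assms by auto
  thus ?thesis using assms by (simp add: field_simps)
qed

text \<open>For a matrix of determinant 1 with eigenvalues \<open>l \<noteq> l\<inverse>\<close>, this is the projection onto
  the eigenline of \<open>l\<close> along that of \<open>l\<inverse>\<close>.\<close>

definition eigenprojection_mat2 :: "'a :: field mat2 \<Rightarrow> 'a \<Rightarrow> 'a mat2" where
  "eigenprojection_mat2 A l = smult_mat2 (inverse (l - inverse l)) (A - smult_mat2 (inverse l) 1)"

lemma eigenprojection_mat2:
  fixes A :: "'a :: field mat2"
  assumes det: "det_mat2 A = 1" and root: "l * l - trace_mat2 A * l + 1 = 0" and "l * l \<noteq> 1"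
  shows "A * eigenprojection_mat2 A l = smult_mat2 l (eigenprojection_mat2 A l)"
    and "trace_mat2 (eigenprojection_mat2 A l) = 1"
proof -
  have "l \<noteq> 0" using root by auto
  have "l - inverse l \<noteq> 0" using \<open>l * l \<noteq> 1\<close> \<open>l \<noteq> 0\<close> by (auto simp: field_simps)
  have trace: "trace_mat2 A = l + inverse l" using root by (rule trace_mat2_eq_eigenvalue_add_inverse)
  have "A * (A - smult_mat2 (inverse l) 1) = A * A - smult_mat2 (inverse l) A"
    by (simp add: right_diff_distrib smult_mat2_mult_right)
  also have "\<dots> = smult_mat2 l (A - smult_mat2 (inverse l) 1)"
    using Cayley_Hamilton_mat2[of A] det trace \<open>l \<noteq> 0\<close>
    by (simp add: smult_mat2_add_left smult_mat2_diff_right)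
  finally show "A * eigenprojection_mat2 A l = smult_mat2 l (eigenprojection_mat2 A l)"
    by (simp add: eigenprojection_mat2_def smult_mat2_mult_right mult.commute)
  have "trace_mat2 (eigenprojection_mat2 A l) = inverse (l - inverse l) * (trace_mat2 A - 2 * inverse l)"
    by (simp add: eigenprojection_mat2_def trace_mat2_def algebra_simps)
  thus "trace_mat2 (eigenprojection_mat2 A l) = 1" using trace \<open>l - inverse l \<noteq> 0\<close> by simp
qed

lemma mat2_eigen_decomposition:
  fixes A :: "'a :: field mat2"
  assumes det: "det_mat2 A = 1" and root: "l * l - trace_mat2 A * l + 1 = 0" and "l * l \<noteq> 1"
  defines "E1 \<equiv> eigenprojection_mat2 A l" and "E2 \<equiv> eigenprojection_mat2 A (inverse l)"
  shows "A ^ n = smult_mat2 (l ^ n) E1 + smult_mat2 (inverse l ^ n) E2"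
    and "E1 + E2 = 1" and "trace_mat2 E1 = 1" and "trace_mat2 E2 = 1"
proof -
  have "l \<noteq> 0" using root by auto
  have "l - inverse l \<noteq> 0" using \<open>l * l \<noteq> 1\<close> \<open>l \<noteq> 0\<close> by (auto simp: field_simps)
  have root': "inverse l * inverse l - trace_mat2 A * inverse l + 1 = 0"
    using root \<open>l \<noteq> 0\<close> by (simp add: trace_mat2_eq_eigenvalue_add_inverse[OF root] field_simps)
  have "inverse l * inverse l \<noteq> 1" using \<open>l * l \<noteq> 1\<close> by (simp flip: inverse_mult_distrib)
  note E1 = eigenprojection_mat2[OF det root \<open>l * l \<noteq> 1\<close>, folded E1_def]
    and E2 = eigenprojection_mat2[OF det root' this, folded E2_def]
  have "inverse (inverse l - l) = - inverse (l - inverse l)"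
    by (metis inverse_minus_eq minus_diff_eq)
  hence "E1 + E2 = smult_mat2 (inverse (l - inverse l)) (smult_mat2 (l - inverse l) 1)"
    unfolding E1_def E2_def eigenprojection_mat2_def by (simp add: mat2_eq_iff algebra_simps)
  thus E12: "E1 + E2 = 1" using \<open>l - inverse l \<noteq> 0\<close> by simp
  show "trace_mat2 E1 = 1" "trace_mat2 E2 = 1" using E1(2) E2(2) .
  show "A ^ n = smult_mat2 (l ^ n) E1 + smult_mat2 (inverse l ^ n) E2"
  proof (induction n)
    case 0
    show ?case using E12 by simp
  next
    case (Suc n)
    hence "A ^ Suc n = smult_mat2 (l ^ n) (A * E1) + smult_mat2 (inverse l ^ n) (A * E2)"
      by (simp add: distrib_left smult_mat2_mult_right)
    thus ?case by (simp add: E1(1) E2(1) mult.commute)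
  qed
qed

lemma power_mat2_eq_smult_one:
  fixes A :: "'a :: field mat2"
  assumes "det_mat2 A = 1" "l * l - trace_mat2 A * l + 1 = 0" "l * l \<noteq> 1"
    and "l ^ n = inverse l ^ n"
  shows "A ^ n = smult_mat2 (l ^ n) 1"
  using mat2_eigen_decomposition(1)[OF assms(1-3), of n] mat2_eigen_decomposition(2)[OF assms(1-3)]
    assms(4)
  by (simp flip: smult_mat2_add_right)

lemma trace_power_mat2:
  fixes A :: "'a :: field mat2"
  assumes "det_mat2 A = 1" "l * l - trace_mat2 A * l + 1 = 0" "l * l \<noteq> 1"
  shows "trace_mat2 (A ^ n) = l ^ n + inverse l ^ n"
  using mat2_eigen_decomposition(1)[OF assms, of n] mat2_eigen_decomposition(3,4)[OF assms]
  by (simp add: trace_mat2_add trace_mat2_smult)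

lemma square_eq_1_if_add_inverse:
  fixes x \<epsilon> :: "'a :: field"
  assumes "x \<noteq> 0" and "\<epsilon> * \<epsilon> = 1" and "x + inverse x = 2 * \<epsilon>"
  shows "x * x = 1"
proof -
  have "(x - \<epsilon>) * (x - \<epsilon>) = x * x - (x + inverse x) * x + 1"
    using assms(2,3) by (simp add: algebra_simps)
  also have "\<dots> = 0" using assms(1) by (simp add: algebra_simps)
  finally show ?thesis using assms(2) by simp
qed

section \<open>A twisted action of \<open>SL\<^sub>2\<close> on \<open>2 \<times> 2\<close> matrices\<close>

lemma cube_add: "(x + y :: gf3_closure) ^ 3 = x ^ 3 + y ^ 3"
  by (rule freshmans_dream) simp_all

lemma cube_diff: "(x - y :: gf3_closure) ^ 3 = x ^ 3 - y ^ 3"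
  using power_char_power_diff[of 3 1 x y] by simp

lemma mat2_triple_eq_0: "P + P + P = (0 :: gf3_closure mat2)"
proof -
  have "x + x + x = 3 * x" for x :: gf3_closure by simp
  thus ?thesis by (simp add: mat2_eq_iff)
qed

abbreviation cube_mat2 :: "gf3_closure mat2 \<Rightarrow> gf3_closure mat2" where
  "cube_mat2 \<equiv> map_mat2 (\<lambda>x. x ^ 3)"

lemma cube_mat2_mult: "cube_mat2 (P * Q) = cube_mat2 P * cube_mat2 Q"
  by (simp add: mat2_eq_iff mat2.map_sel cube_add power_mult_distrib)

lemma cube_mat2_uminus: "cube_mat2 (- P) = - cube_mat2 P"
  by (simp add: mat2_eq_iff mat2.map_sel)

lemma cube_mat2_one [simp]: "cube_mat2 1 = 1"
  by (simp add: mat2_eq_iff mat2.map_sel)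

lemma det_cube_mat2 [simp]: "det_mat2 (cube_mat2 P) = det_mat2 P ^ 3"
  by (simp add: det_mat2_def mat2.map_sel cube_diff power_mult_distrib)

lemma trace_cube_mat2 [simp]: "trace_mat2 (cube_mat2 P) = trace_mat2 P ^ 3"
  by (simp add: trace_mat2_def mat2.map_sel cube_add)

text \<open>Identifying \<open>2 \<times> 2\<close> matrices with tensors, \<open>act 1 A\<close> is the action of \<open>A\<close> on the
  tensor product of the natural module with its image under the Frobenius map
  \<open>x \<mapsto> x\<^sup>3\<close>; the scalar \<open>e\<close> will be \<open>\<plusminus>1\<close>.\<close>

definition act :: "gf3_closure \<Rightarrow> gf3_closure mat2 \<Rightarrow> gf3_closure mat2 \<Rightarrow> gf3_closure mat2" where
  "act e A P = smult_mat2 e (A * P * transpose_mat2 (cube_mat2 A))"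

lemma act_act: "act e A (act e' B P) = act (e * e') (A * B) P"
  by (simp add: act_def cube_mat2_mult transpose_mat2_mult smult_mat2_mult_left
      smult_mat2_mult_right mult.assoc mult.commute)

lemma act_comp: "act e A \<circ> act e' B = act (e * e') (A * B)"
  by (rule ext) (simp add: act_act)

lemma additive_act: "additive (act e A)"
  by unfold_locales (simp add: act_def algebra_simps smult_mat2_add_right)

lemma act_one_one: "act 1 1 = id"
  by (rule ext) (simp add: act_def)

lemma act_funpow: "act e A ^^ n = act (e ^ n) (A ^ n)"
  by (induction n) (simp_all add: act_one_one act_comp)

lemma act_uminus_mat2: "act e (- A) = act e A"
  by (rule ext) (simp add: act_def cube_mat2_uminus transpose_mat2_minus)

lemma act_smult_one: "s = 1 \<or> s = - 1 \<Longrightarrow> act 1 (smult_mat2 s 1) = id"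
  by (auto simp: smult_mat2_minus_1 act_uminus_mat2 act_one_one)

lemma act_eq_idD:
  assumes act: "act e B = id" and det: "det_mat2 B = 1" and e: "e * e = 1"
  shows "e = 1 \<and> (B = 1 \<or> B = - 1)"
proof -
  obtain a b c d where B: "B = Mat2 a b c d" by (cases B)
  have "e \<noteq> 0" using e by auto
  have "act e B (Mat2 1 0 0 0) = Mat2 1 0 0 0" using act by simp
  hence "e * (c * c ^ 3) = 0" unfolding act_def B by (simp add: mat2_eq_iff mat2.map_sel)
  hence c: "c = 0" using \<open>e \<noteq> 0\<close> by simp
  have "act e B (Mat2 0 0 0 1) = Mat2 0 0 0 1" using act by simp
  hence "e * (b * b ^ 3) = 0" and ed: "e * (d * d ^ 3) = 1"
    unfolding act_def B by (simp_all add: mat2_eq_iff mat2.map_sel)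
  hence b: "b = 0" using \<open>e \<noteq> 0\<close> by simp
  have "act e B (Mat2 0 1 0 0) = Mat2 0 1 0 0" using act by simp
  hence ead: "e * (a * d ^ 3) = 1" unfolding act_def B by (simp add: mat2_eq_iff mat2.map_sel b c)
  have ad: "a * d = 1" using det unfolding B det_mat2_def by (simp add: b c)
  have "e * (a * d ^ 3) = e * (d * d) * (a * d)" by (simp add: power3_eq_cube algebra_simps)
  hence edd: "e * (d * d) = 1" using ead ad by simp
  have "e * (d * d ^ 3) = (e * (d * d)) * (d * d)" by (simp add: power3_eq_cube algebra_simps)
  hence dd: "d * d = 1" using ed edd by simp
  have "a = a * (d * d)" using dd by simp
  hence "a = d" using ad by (simp add: mult.assoc[symmetric])
  moreover have "d = 1 \<or> d = - 1" using dd by (simp add: square_eq_1_iff)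
  ultimately have "B = 1 \<or> B = - 1" unfolding B using b c by (auto simp: mat2_eq_iff)
  moreover have "e = 1" using edd dd by simp
  ultimately show ?thesis by simp
qed

lemma act_funpow_eq_id_iff_eigenvalue_pm_one:
  assumes det: "det_mat2 A = 1" and root: "l * l - trace_mat2 A * l + 1 = 0" and "l * l \<noteq> 1"
  shows "act 1 A ^^ n = id \<longleftrightarrow> l ^ n = 1 \<or> l ^ n = - 1"
proof
  have "l \<noteq> 0" using root by auto
  assume "act 1 A ^^ n = id"
  hence "A ^ n = 1 \<or> A ^ n = - 1"
    using act_eq_idD[of 1 "A ^ n"] by (simp add: act_funpow det_mat2_power det)
  hence "l ^ n + inverse (l ^ n) = 2 * 1 \<or> l ^ n + inverse (l ^ n) = 2 * (- 1)"
    using trace_power_mat2[OF det root \<open>l * l \<noteq> 1\<close>, of n]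
    by (auto simp: trace_mat2_def power_inverse)
  hence "l ^ n * l ^ n = 1"
    using square_eq_1_if_add_inverse[of "l ^ n" 1] square_eq_1_if_add_inverse[of "l ^ n" "- 1"]
      \<open>l \<noteq> 0\<close> by auto
  thus "l ^ n = 1 \<or> l ^ n = - 1" by (simp add: square_eq_1_iff)
next
  assume pm: "l ^ n = 1 \<or> l ^ n = - 1"
  hence "l ^ n = inverse l ^ n" by (auto simp: power_inverse)
  hence "A ^ n = smult_mat2 (l ^ n) 1"
    using det root \<open>l * l \<noteq> 1\<close> by (rule power_mat2_eq_smult_one[rotated 3])
  thus "act 1 A ^^ n = id" using act_smult_one[OF pm] by (simp add: act_funpow)
qed

lemma trace_eq_if_act_fixes:
  assumes det: "det_mat2 A = 1" and e: "e * e = 1" and fixed: "act e A P = P" and "P \<noteq> 0"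
  shows "trace_mat2 A = e * trace_mat2 A ^ 3"
proof -
  define B where "B = transpose_mat2 (cube_mat2 A)"
  define C where "C = smult_mat2 e (adj_mat2 B)"
  have det_B: "det_mat2 B = 1" unfolding B_def by (simp add: det)
  have det_C: "det_mat2 C = 1" unfolding C_def by (simp add: det_mat2_smult det_B power2_eq_square e)
  have trace_C: "trace_mat2 C = e * trace_mat2 A ^ 3"
    unfolding C_def B_def by (simp add: trace_mat2_smult)
  have APB: "A * P * B = smult_mat2 e P"
    using arg_cong[OF fixed, of "smult_mat2 e"] unfolding act_def B_def by (simp add: e)
  have AP: "A * P = P * C"
  proof -
    have "A * P = A * P * (B * adj_mat2 B)" using adj_mat2(1)[of B] det_B by simp
    also have "\<dots> = (A * P * B) * adj_mat2 B" by (simp add: mult.assoc)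
    also have "\<dots> = P * C" unfolding APB C_def by (simp add: smult_mat2_mult_left smult_mat2_mult_right)
    finally show ?thesis .
  qed
  have "(A * A) * P = P * (C * C)" by (metis AP mult.assoc)
  hence "(smult_mat2 (trace_mat2 A) A - 1) * P = P * (smult_mat2 (trace_mat2 C) C - 1)"
    using Cayley_Hamilton_mat2[of A] Cayley_Hamilton_mat2[of C] det det_C by simp
  hence "smult_mat2 (trace_mat2 A) (A * P) = smult_mat2 (trace_mat2 C) (P * C)"
    by (simp add: algebra_simps smult_mat2_mult_left smult_mat2_mult_right)
  hence "smult_mat2 (trace_mat2 A - trace_mat2 C) (P * C) = 0"
    unfolding AP by (simp add: mat2_eq_iff algebra_simps)
  hence "smult_mat2 (trace_mat2 A - trace_mat2 C) (P * C * adj_mat2 C) = 0"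
    by (metis smult_mat2_mult_left mult_zero_left)
  hence "smult_mat2 (trace_mat2 A - trace_mat2 C) P = 0"
    using adj_mat2(1)[of C] det_C by (simp add: mult.assoc)
  hence "trace_mat2 A - trace_mat2 C = 0" using \<open>P \<noteq> 0\<close> by (auto simp: mat2_eq_iff)
  thus ?thesis using trace_C by simp
qed

section \<open>Semidirect products with an abelian normal subgroup\<close>

definition orbit_sum :: "('v :: ab_group_add \<Rightarrow> 'v) \<Rightarrow> 'v \<Rightarrow> nat \<Rightarrow> 'v" where
  "orbit_sum f P n = (\<Sum>i<n. (f ^^ i) P)"

lemma orbit_sum_0 [simp]: "orbit_sum f P 0 = 0"
  and orbit_sum_Suc: "orbit_sum f P (Suc n) = orbit_sum f P n + (f ^^ n) P"
  by (simp_all add: orbit_sum_def)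

lemma orbit_sum_id: "orbit_sum id P 3 = P + P + P"
  by (simp add: orbit_sum_def numeral_3_eq_3)

lemma additive_funpow:
  fixes f :: "'a :: ab_group_add \<Rightarrow> 'a"
  assumes "additive f"
  shows "additive (f ^^ n)"
proof (induction n)
  case 0
  show ?case by unfold_locales simp
next
  case (Suc n)
  interpret additive f by fact
  interpret IH: additive "f ^^ n" by (rule Suc)
  show ?case by unfold_locales (simp add: add IH.add)
qed

lemma orbit_sum_Suc_left:
  assumes "additive f"
  shows "orbit_sum f P (Suc n) = f (orbit_sum f P n) + P"
proof -
  interpret additive f by fact
  show ?thesis
    unfolding orbit_sum_def sum.lessThan_Suc_shift sum funpow_Suc_right
    by (simp add: add.commute funpow_swap1)
qed

lemma orbit_sum_of_zero:
  assumes "additive f"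
  shows "orbit_sum f 0 n = 0"
proof -
  have "(f ^^ i) 0 = 0" for i using additive.zero[OF additive_funpow[OF assms]] .
  thus ?thesis by (simp add: orbit_sum_def)
qed

lemma orbit_sum_eq_0_if_fixed_point_free:
  assumes "additive f" and "(f ^^ n) = id" and "\<And>Q. f Q = Q \<Longrightarrow> Q = 0"
  shows "orbit_sum f P n = 0"
proof -
  have "f (orbit_sum f P n) + P = orbit_sum f P n + P"
    using assms(1,2) by (simp flip: orbit_sum_Suc_left add: orbit_sum_Suc)
  thus ?thesis using assms(3) by simp
qed

text \<open>A pair \<open>(P, f)\<close> stands for the affine map \<open>Q \<mapsto> P + f Q\<close>; multiplication is composition.\<close>

locale additive_action =
  fixes V :: "'v :: ab_group_add set" and G :: "('v \<Rightarrow> 'v) set"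
  assumes zero_in_V: "0 \<in> V" and add_in_V: "P \<in> V \<Longrightarrow> Q \<in> V \<Longrightarrow> P + Q \<in> V"
    and uminus_in_V: "P \<in> V \<Longrightarrow> - P \<in> V"
    and id_in_G: "id \<in> G" and comp_in_G: "f \<in> G \<Longrightarrow> g \<in> G \<Longrightarrow> f \<circ> g \<in> G"
    and inverse_in_G: "f \<in> G \<Longrightarrow> \<exists>g \<in> G. g \<circ> f = id \<and> f \<circ> g = id"
    and additive_G: "f \<in> G \<Longrightarrow> additive f"
    and G_maps_V: "f \<in> G \<Longrightarrow> P \<in> V \<Longrightarrow> f P \<in> V"
begin

definition semidirect_product :: "('v \<times> ('v \<Rightarrow> 'v)) monoid" where
  "semidirect_product =
    \<lparr>carrier = V \<times> G, monoid.mult = \<lambda>x y. (fst x + snd x (fst y), snd x \<circ> snd y), one = (0, id)\<rparr>"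

lemma semidirect_product_simps [simp]:
  "carrier semidirect_product = V \<times> G"
  "x \<otimes>\<^bsub>semidirect_product\<^esub> y = (fst x + snd x (fst y), snd x \<circ> snd y)"
  "\<one>\<^bsub>semidirect_product\<^esub> = (0, id)"
  by (simp_all add: semidirect_product_def)

lemma group_semidirect_product: "group semidirect_product"
proof (rule groupI)
  fix x y
  assume "x \<in> carrier semidirect_product" "y \<in> carrier semidirect_product"
  thus "x \<otimes>\<^bsub>semidirect_product\<^esub> y \<in> carrier semidirect_product"
    by (auto simp: add_in_V G_maps_V comp_in_G)
next
  fix x y z
  assume "x \<in> carrier semidirect_product"
  hence "additive (snd x)" by (auto simp: additive_G)
  thus "x \<otimes>\<^bsub>semidirect_product\<^esub> y \<otimes>\<^bsub>semidirect_product\<^esub> z =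
      x \<otimes>\<^bsub>semidirect_product\<^esub> (y \<otimes>\<^bsub>semidirect_product\<^esub> z)"
    by (simp add: additive.add add.assoc comp_assoc)
next
  fix x
  assume x: "x \<in> carrier semidirect_product"
  then obtain g where g: "g \<in> G" "g \<circ> snd x = id" using inverse_in_G[of "snd x"] by auto
  hence "(- g (fst x), g) \<in> carrier semidirect_product"
    using x by (auto simp: uminus_in_V G_maps_V)
  moreover have "(- g (fst x), g) \<otimes>\<^bsub>semidirect_product\<^esub> x = \<one>\<^bsub>semidirect_product\<^esub>"
    using g by simp
  ultimately show "\<exists>y \<in> carrier semidirect_product. y \<otimes>\<^bsub>semidirect_product\<^esub> x = \<one>\<^bsub>semidirect_product\<^esub>"
    by blast
qed (simp_all add: zero_in_V id_in_G)

lemma semidirect_product_pow: "(P, f) [^]\<^bsub>semidirect_product\<^esub> n = (orbit_sum f P n, f ^^ n)"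
  by (induction n) (simp_all add: orbit_sum_Suc funpow_simps_right comp_def id_def del: funpow.simps)

lemma semidirect_product_pow_zero_eq_one:
  "f \<in> G \<Longrightarrow> (0, f) [^]\<^bsub>semidirect_product\<^esub> n = \<one>\<^bsub>semidirect_product\<^esub> \<longleftrightarrow> f ^^ n = id"
  using orbit_sum_of_zero[OF additive_G] by (simp add: semidirect_product_pow)

lemma semidirect_product_pow_eq_one_if_fixed_point_free:
  assumes "f \<in> G" and "f ^^ n = id" and "\<And>Q. f Q = Q \<Longrightarrow> Q = 0"
  shows "(P, f) [^]\<^bsub>semidirect_product\<^esub> n = \<one>\<^bsub>semidirect_product\<^esub>"
  using orbit_sum_eq_0_if_fixed_point_free[OF additive_G[OF assms(1)] assms(2,3)] assms(2)
  by (simp add: semidirect_product_pow)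

text \<open>Here \<open>x ^ p\<close> is a translation, and the translations have exponent 3.\<close>

lemma semidirect_product_pow_mult_3_eq_one:
  assumes "\<And>Q :: 'v. Q + Q + Q = 0" and "x \<in> carrier semidirect_product" and "snd x ^^ p = id"
  shows "x [^]\<^bsub>semidirect_product\<^esub> (p * 3) = \<one>\<^bsub>semidirect_product\<^esub>"
proof -
  interpret group semidirect_product by (rule group_semidirect_product)
  obtain P f where x: "x = (P, f)" by force
  have "x [^]\<^bsub>semidirect_product\<^esub> (p * 3) = (x [^]\<^bsub>semidirect_product\<^esub> p) [^]\<^bsub>semidirect_product\<^esub> (3 :: nat)"
    using assms(2) by (simp add: nat_pow_pow)
  also have "x [^]\<^bsub>semidirect_product\<^esub> p = (orbit_sum f P p, id)"
    using x assms(3) by (simp add: semidirect_product_pow)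
  finally show ?thesis using assms(1) by (simp add: semidirect_product_pow orbit_sum_id)
qed

lemma elem_orders_semidirect_product:
  assumes "f \<in> G" and "\<And>n. f ^^ n = id \<longleftrightarrow> d dvd n"
  shows "d \<in> elem_orders semidirect_product"
proof -
  interpret group semidirect_product by (rule group_semidirect_product)
  have "(0, f) \<in> carrier semidirect_product" using assms(1) zero_in_V by simp
  moreover from this have "ord (0, f) = d"
    using assms semidirect_product_pow_zero_eq_one by (simp add: ord_unique)
  ultimately show ?thesis unfolding elem_orders_def by (metis image_eqI)
qed

definition translation_subgroup :: "('v \<times> ('v \<Rightarrow> 'v)) set" where
  "translation_subgroup = V \<times> {id}"

lemma translation_subgroup_normal: "translation_subgroup \<lhd> semidirect_product"
proof -
  interpret group semidirect_product by (rule group_semidirect_product)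
  have inv: "inv\<^bsub>semidirect_product\<^esub> (P, f) = (- g P, g)"
    if "P \<in> V" "f \<in> G" "g \<in> G" "g \<circ> f = id" for P f g
    by (rule inv_equality) (use that in \<open>simp_all add: uminus_in_V G_maps_V\<close>)
  have "subgroup translation_subgroup semidirect_product"
  proof (rule subgroupI)
    show "translation_subgroup \<subseteq> carrier semidirect_product"
      using id_in_G by (auto simp: translation_subgroup_def)
    show "translation_subgroup \<noteq> {}" using zero_in_V by (auto simp: translation_subgroup_def)
    show "inv\<^bsub>semidirect_product\<^esub> a \<in> translation_subgroup" if "a \<in> translation_subgroup" for a
      using that inv[of "fst a" id id] id_in_G by (auto simp: translation_subgroup_def uminus_in_V)
    show "a \<otimes>\<^bsub>semidirect_product\<^esub> b \<in> translation_subgroup"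
      if "a \<in> translation_subgroup" "b \<in> translation_subgroup" for a b
      using that by (auto simp: translation_subgroup_def add_in_V)
  qed
  moreover have "x \<otimes>\<^bsub>semidirect_product\<^esub> n \<otimes>\<^bsub>semidirect_product\<^esub> inv\<^bsub>semidirect_product\<^esub> x
      \<in> translation_subgroup"
    if x: "x \<in> carrier semidirect_product" and n: "n \<in> translation_subgroup" for x n
  proof -
    obtain Q f where Q: "x = (Q, f)" "Q \<in> V" "f \<in> G" using x by (cases x) simp
    obtain g where g: "g \<in> G" "g \<circ> f = id" "f \<circ> g = id" using inverse_in_G[OF Q(3)] by blast
    obtain P where P: "n = (P, id)" "P \<in> V" using n by (auto simp: translation_subgroup_def)
    have "f (- g Q) = - Q" using additive.minus[OF additive_G[OF Q(3)]] g(3) by (metis comp_apply id_apply)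
    hence "x \<otimes>\<^bsub>semidirect_product\<^esub> n \<otimes>\<^bsub>semidirect_product\<^esub> inv\<^bsub>semidirect_product\<^esub> x = (f P, id)"
      using Q P g inv[OF Q(2,3) g(1,2)] additive.add[OF additive_G[OF Q(3)]] by simp
    thus ?thesis using G_maps_V[OF Q(3) P(2)] by (simp add: translation_subgroup_def)
  qed
  ultimately show ?thesis by (simp add: normal_inv_iff)
qed

lemma card_translation_subgroup: "card translation_subgroup = card V"
  by (simp add: translation_subgroup_def card_cartesian_product)

end

section \<open>Element orders and \<open>O\<^sub>p\<close> under isomorphisms\<close>

lemma max_orders_eqI:
  assumes "\<And>n. n \<in> elem_orders G \<Longrightarrow> \<exists>d \<in> T. n dvd d"
    and "T \<subseteq> elem_orders G"
    and "\<And>d d'. d \<in> T \<Longrightarrow> d' \<in> T \<Longrightarrow> d dvd d' \<Longrightarrow> d = d'"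
  shows "max_orders G = T"
proof
  show "max_orders G \<subseteq> T"
  proof
    fix n
    assume n: "n \<in> max_orders G"
    then obtain d where "d \<in> T" "n dvd d" using assms(1) by (auto simp: max_orders_def)
    moreover from this have "d = n" using n assms(2) by (auto simp: max_orders_def)
    ultimately show "n \<in> T" by simp
  qed
  show "T \<subseteq> max_orders G"
  proof
    fix d
    assume d: "d \<in> T"
    have "m = d" if "m \<in> elem_orders G" "d dvd m" for m
    proof -
      obtain d' where "d' \<in> T" "m dvd d'" using assms(1) \<open>m \<in> elem_orders G\<close> by blast
      moreover from this have "d = d'" using assms(3) d \<open>d dvd m\<close> dvd_trans by blast
      ultimately show "m = d" using \<open>d dvd m\<close> by (simp add: dvd_antisym)
    qed
    thus "d \<in> max_orders G" using d assms(2) by (auto simp: max_orders_def)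
  qed
qed

lemma (in group) ord_eq_prime_power:
  assumes "x \<in> carrier G" and "Factorial_Ring.prime p"
    and "x [^] (p ^ Suc k) = \<one>" and "x [^] (p ^ k) \<noteq> \<one>"
  shows "ord x = p ^ Suc k"
proof -
  obtain j where "j \<le> Suc k" "ord x = p ^ j"
    using assms(1,2,3) pow_eq_id divides_primepow_nat by metis
  moreover have "\<not> j \<le> k"
    using assms(1,4) \<open>ord x = p ^ j\<close> pow_eq_id le_imp_power_dvd by metis
  ultimately show ?thesis by (metis le_SucE)
qed

lemma iso_ord:
  assumes "group G" "group H" "h \<in> iso G H" "x \<in> carrier G"
  shows "group.ord H (h x) = group.ord G x"
proof -
  interpret G: group G by fact
  interpret H: group H by fact
  have inj: "inj_on h (carrier G)" and hom: "h \<in> hom G H"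
    using assms(3) by (auto simp: iso_def bij_betw_def)
  have "h x [^]\<^bsub>H\<^esub> n = \<one>\<^bsub>H\<^esub> \<longleftrightarrow> G.ord x dvd n" for n :: nat
  proof -
    have "h x [^]\<^bsub>H\<^esub> n = \<one>\<^bsub>H\<^esub> \<longleftrightarrow> h (x [^]\<^bsub>G\<^esub> n) = h \<one>\<^bsub>G\<^esub>"
      using hom_nat_pow[OF hom assms(4,1,2)] hom_one[OF hom assms(1,2)] by simp
    also have "\<dots> \<longleftrightarrow> x [^]\<^bsub>G\<^esub> n = \<one>\<^bsub>G\<^esub>" using inj assms(4) by (auto dest: inj_onD)
    finally show ?thesis using G.pow_eq_id[OF assms(4)] by simp
  qed
  moreover have "h x \<in> carrier H" using hom assms(4) by (auto simp: hom_def)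
  ultimately show ?thesis using H.ord_unique by blast
qed

lemma iso_max_orders:
  assumes "group G" "group H" "h \<in> iso G H"
  shows "max_orders H = max_orders G"
proof -
  have "h ` carrier G = carrier H" using assms(3) by (simp add: iso_def bij_betw_def)
  hence "elem_orders H = elem_orders G"
    unfolding elem_orders_def using iso_ord[OF assms] by (force simp: image_iff)
  thus ?thesis by (simp add: max_orders_def)
qed

lemma O_p_nontrivial:
  assumes "group G" and "N \<lhd> G" and "card N = p ^ k" and "N \<noteq> {\<one>\<^bsub>G\<^esub>}"
  shows "O_p p G \<noteq> {\<one>\<^bsub>G\<^esub>}"
proof -
  have "N \<subseteq> O_p p G"
    using assms(2,3) by (auto simp: O_p_def normal_p_subgroup_def intro: generate.incl)
  moreover have "\<one>\<^bsub>G\<^esub> \<in> N" by (rule subgroup.one_closed[OF normal_imp_subgroup[OF assms(2)]])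
  ultimately show ?thesis using assms(4) by blast
qed

lemma iso_O_p_nontrivial:
  assumes "group G" "group H" "h \<in> iso G H"
    and "N \<lhd> G" and "card N = p ^ k" and "N \<noteq> {\<one>\<^bsub>G\<^esub>}"
  shows "O_p p H \<noteq> {\<one>\<^bsub>H\<^esub>}"
proof (rule O_p_nontrivial[OF assms(2)])
  have N: "N \<subseteq> carrier G" by (rule subgroup.subset[OF normal_imp_subgroup[OF assms(4)]])
  have inj: "inj_on h (carrier G)" using assms(3) by (simp add: iso_def bij_betw_def)
  show "h ` N \<lhd> H" by (rule iso_normal_subgroup[OF assms(3,1,2,4)])
  show "card (h ` N) = p ^ k" using assms(5) card_image[OF inj_on_subset[OF inj N]] by simp
  have "h \<one>\<^bsub>G\<^esub> = \<one>\<^bsub>H\<^esub>"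
    using assms(3) hom_one[OF _ assms(1,2)] by (simp add: Group.iso_iff)
  moreover obtain y where "y \<in> N" "y \<noteq> \<one>\<^bsub>G\<^esub>"
    using assms(6) subgroup.one_closed[OF normal_imp_subgroup[OF assms(4)]] by blast
  moreover have "\<one>\<^bsub>G\<^esub> \<in> carrier G" by (rule monoid.one_closed[OF group.is_monoid[OF assms(1)]])
  ultimately show "h ` N \<noteq> {\<one>\<^bsub>H\<^esub>}" using N inj by (metis inj_onD image_eqI singletonD subsetD)
qed

lemma finite_group_iso_nat_monoid:
  assumes "group G" and "finite (carrier G)"
  obtains H :: "nat monoid" and h where "group H" "finite (carrier H)" "h \<in> iso G H"
proof -
  interpret G: group G by fact
  obtain h :: "'a \<Rightarrow> nat" where inj: "inj_on h (carrier G)"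
    using finite_imp_inj_to_nat_seg[OF assms(2)] by blast
  define g where "g = inv_into (carrier G) h"
  define H :: "nat monoid" where
    "H = \<lparr>carrier = h ` carrier G, monoid.mult = \<lambda>x y. h (g x \<otimes>\<^bsub>G\<^esub> g y), one = h \<one>\<^bsub>G\<^esub>\<rparr>"
  have "h \<in> iso G H"
    using inj by (auto simp: iso_def hom_def bij_betw_def H_def g_def)
  moreover have "group H"
  proof -
    have "group (H\<lparr>one := h \<one>\<^bsub>G\<^esub>\<rparr>)" by (rule G.iso_imp_img_group[OF \<open>h \<in> iso G H\<close>])
    thus ?thesis by (simp add: H_def)
  qed
  ultimately show ?thesis using that assms(2) by (simp add: H_def)
qed

section \<open>The group for \<open>q = 3 ^ \<alpha>\<close>\<close>

locale odd_power_of_3 =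
  fixes \<alpha> :: nat
  assumes odd_exponent: "odd \<alpha>" and exponent_ge_3: "\<alpha> \<ge> 3"
begin

abbreviation q :: nat where "q \<equiv> 3 ^ \<alpha>"

lemma q_ge_27: "q \<ge> 27"
  using power_increasing[OF exponent_ge_3, of "3 :: nat"] by simp

lemma q_mod_4: "q mod 4 = 3"
proof -
  obtain k where "\<alpha> = 2 * k + 1" using odd_exponent oddE by blast
  hence "q = 3 * 9 ^ k" by (simp add: power_add power_mult)
  moreover have "(9 :: nat) ^ k mod 4 = 1" by (induction k) (simp_all add: mod_mult_right_eq[symmetric])
  ultimately show ?thesis by (simp add: mod_mult_right_eq[of 3 "9 ^ k" 4, symmetric])
qed

lemma q_eq_4k_plus_3: "q = 4 * (q div 4) + 3"
  using div_mult_mod_eq[of q 4] q_mod_4 by simp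

lemma even_q_minus_1: "even (q - 1)"
  by simp

lemma even_half_q_plus_1: "even ((q + 1) div 2)"
proof -
  have "(q + 1) div 2 = 2 * (q div 4 + 1)" using q_eq_4k_plus_3 by simp
  thus ?thesis by simp
qed

lemma q_squared_minus_1: "q * q - 1 = (q - 1) * (q + 1)"
  by (simp add: algebra_simps)

lemma q_minus_1_dvd_if_dvd_double:
  assumes "(q - 1) dvd 2 * n" and "even n"
  shows "(q - 1) dvd n"
proof -
  define m where "m = 2 * (q div 4) + 1"
  have q1: "q - 1 = 2 * m" using q_eq_4k_plus_3 by (simp add: m_def)
  obtain k where n: "n = 2 * k" using assms(2) by blast
  have "m dvd 2 * k" using assms(1) unfolding q1 n by simp
  hence "m dvd k" by (simp add: m_def coprime_dvd_mult_right_iff)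
  thus ?thesis unfolding q1 n by simp
qed

definition Fq :: "gf3_closure set" where
  "Fq = {x. x ^ q = x}"

lemma card_Fq: "card Fq = q"
  using card_Frobenius_fixed_points[where ?'a = gf3_closure, of \<alpha>] exponent_ge_3 by (simp add: Fq_def)

lemma power_q_add: "(x + y :: gf3_closure) ^ q = x ^ q + y ^ q"
  by (rule freshmans_dream') simp_all

lemma power_q_diff: "(x - y :: gf3_closure) ^ q = x ^ q - y ^ q"
  by (rule power_char_power_diff) simp

lemma Fq_closed:
  "0 \<in> Fq" "1 \<in> Fq" "- 1 \<in> Fq"
  "x \<in> Fq \<Longrightarrow> y \<in> Fq \<Longrightarrow> x + y \<in> Fq" "x \<in> Fq \<Longrightarrow> y \<in> Fq \<Longrightarrow> x * y \<in> Fq"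
  "x \<in> Fq \<Longrightarrow> - x \<in> Fq" "x \<in> Fq \<Longrightarrow> x ^ 3 \<in> Fq" "x \<in> Fq \<Longrightarrow> inverse x \<in> Fq"
  using power_q_add power_q_diff[of 0] exponent_ge_3
  by (auto simp: Fq_def power_mult_distrib power_inverse simp flip: power_mult)
    (metis mult.commute power_mult)

lemma minus_one_not_square_in_Fq: "t \<in> Fq \<Longrightarrow> t * t \<noteq> - 1"
proof
  assume t: "t \<in> Fq" and tt: "t * t = - 1"
  have "q = 2 * (2 * (q div 4) + 1) + 1" using q_eq_4k_plus_3 by simp
  hence "t ^ q = (t ^ 2) ^ (2 * (q div 4) + 1) * t"
    by (metis power_add power_mult power_one_right)
  also have "\<dots> = - t" using tt by (simp add: power2_eq_square)
  finally have "t = - t" using t by (simp add: Fq_def)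
  hence "2 * t = 0" by simp
  thus False using tt by simp
qed

definition mat_Fq :: "gf3_closure mat2 set" where
  "mat_Fq = {P. m11 P \<in> Fq \<and> m12 P \<in> Fq \<and> m21 P \<in> Fq \<and> m22 P \<in> Fq}"

definition SL2_Fq :: "gf3_closure mat2 set" where
  "SL2_Fq = {A \<in> mat_Fq. det_mat2 A = 1}"

definition act_group :: "(gf3_closure mat2 \<Rightarrow> gf3_closure mat2) set" where
  "act_group = {act e A | e A. (e = 1 \<or> e = - 1) \<and> A \<in> SL2_Fq}"

lemma mat_Fq_closed:
  "0 \<in> mat_Fq" "1 \<in> mat_Fq"
  "P \<in> mat_Fq \<Longrightarrow> Q \<in> mat_Fq \<Longrightarrow> P + Q \<in> mat_Fq"
  "P \<in> mat_Fq \<Longrightarrow> Q \<in> mat_Fq \<Longrightarrow> P * Q \<in> mat_Fq"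
  "P \<in> mat_Fq \<Longrightarrow> - P \<in> mat_Fq" "P \<in> mat_Fq \<Longrightarrow> adj_mat2 P \<in> mat_Fq"
  "s \<in> Fq \<Longrightarrow> P \<in> mat_Fq \<Longrightarrow> smult_mat2 s P \<in> mat_Fq"
  "P \<in> mat_Fq \<Longrightarrow> transpose_mat2 (cube_mat2 P) \<in> mat_Fq"
  by (simp_all add: mat_Fq_def Fq_closed mat2.map_sel)

lemma trace_mat_Fq: "P \<in> mat_Fq \<Longrightarrow> trace_mat2 P \<in> Fq"
  by (simp add: mat_Fq_def trace_mat2_def Fq_closed)

lemma act_group_maps_mat_Fq: "f \<in> act_group \<Longrightarrow> P \<in> mat_Fq \<Longrightarrow> f P \<in> mat_Fq"
  by (auto simp: act_group_def SL2_Fq_def act_def mat_Fq_closed Fq_closed)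

lemma SL2_Fq_closed:
  "1 \<in> SL2_Fq" "A \<in> SL2_Fq \<Longrightarrow> B \<in> SL2_Fq \<Longrightarrow> A * B \<in> SL2_Fq"
  "A \<in> SL2_Fq \<Longrightarrow> adj_mat2 A \<in> SL2_Fq"
  by (simp_all add: SL2_Fq_def mat_Fq_closed det_mat2_mult)

lemma act_group_comp: "f \<in> act_group \<Longrightarrow> g \<in> act_group \<Longrightarrow> f \<circ> g \<in> act_group"
  unfolding act_group_def using SL2_Fq_closed(2) by (fastforce simp: act_comp)

lemma act_group_inverse: "f \<in> act_group \<Longrightarrow> \<exists>g \<in> act_group. g \<circ> f = id \<and> f \<circ> g = id"
proof -
  assume "f \<in> act_group"
  then obtain e A where f: "f = act e A" "e = 1 \<or> e = - 1" "A \<in> SL2_Fq" by (auto simp: act_group_def)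
  have "act e (adj_mat2 A) \<in> act_group" using f SL2_Fq_closed(3) by (auto simp: act_group_def)
  moreover have "act e (adj_mat2 A) \<circ> f = id" "f \<circ> act e (adj_mat2 A) = id"
    using f adj_mat2[of A] by (auto simp: SL2_Fq_def act_comp act_one_one)
  ultimately show ?thesis by blast
qed

sublocale additive_action mat_Fq act_group
proof (rule additive_action.intro)
  show "id \<in> act_group" using SL2_Fq_closed(1) act_one_one by (force simp: act_group_def)
  show "additive f" if "f \<in> act_group" for f using that additive_act by (auto simp: act_group_def)
qed (simp_all add: mat_Fq_closed act_group_comp act_group_inverse act_group_maps_mat_Fq)

lemma card_mat_Fq: "card mat_Fq = 3 ^ (4 * \<alpha>)"
proof -
  have "mat_Fq = (\<lambda>(a, b, c, d). Mat2 a b c d) ` (Fq \<times> Fq \<times> Fq \<times> Fq)"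
    by (auto simp: mat_Fq_def image_iff) (metis mat2.collapse)
  moreover have "inj_on (\<lambda>(a, b, c, d). Mat2 a b c d) (Fq \<times> Fq \<times> Fq \<times> Fq)"
    by (auto simp: inj_on_def)
  ultimately have "card mat_Fq = q ^ 4" by (simp add: card_image card_cartesian_product card_Fq power4_eq_xxxx)
  thus ?thesis by (simp add: power_mult mult.commute)
qed

lemma finite_semidirect_product: "finite (carrier semidirect_product)"
proof -
  have "finite mat_Fq" using card_mat_Fq card.infinite by fastforce
  have "act_group = (\<lambda>(e, A). act e A) ` ({1, - 1} \<times> SL2_Fq)"
    by (auto simp: act_group_def)
  moreover have "finite SL2_Fq"
    using \<open>finite mat_Fq\<close> by (rule finite_subset[rotated]) (auto simp: SL2_Fq_def)
  ultimately have "finite act_group" by (simp add: finite_subset)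
  with \<open>finite mat_Fq\<close> show ?thesis by simp
qed

lemma translation_subgroup_nontrivial: "translation_subgroup \<noteq> {\<one>\<^bsub>semidirect_product\<^esub>}"
proof
  assume "translation_subgroup = {\<one>\<^bsub>semidirect_product\<^esub>}"
  moreover have "(1, id) \<in> translation_subgroup"
    by (simp add: translation_subgroup_def mat_Fq_closed)
  ultimately show False by (simp add: mat2_eq_iff)
qed

lemma SL2_Fq_power_eq_pm_one:
  assumes "A \<in> SL2_Fq" and "trace_mat2 A * trace_mat2 A \<noteq> 1"
  shows "A ^ (q - 1) = 1 \<or> A ^ ((q + 1) div 2) = 1 \<or> A ^ ((q + 1) div 2) = - 1"
proof -
  define t where "t = trace_mat2 A"
  have det: "det_mat2 A = 1" and "t ^ q = t"
    using assms(1) trace_mat_Fq by (auto simp: SL2_Fq_def t_def Fq_def)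
  obtain l where root: "l * l - t * l + 1 = 0" and "l * l \<noteq> 1"
    using exists_eigenvalue_not_pm_one assms(2) unfolding t_def by blast
  have "l \<noteq> 0" using root by auto
  have power_q: "A ^ n = smult_mat2 (l ^ n) 1" if "l ^ n = inverse l ^ n" for n
    using det root[unfolded t_def] \<open>l * l \<noteq> 1\<close> that by (rule power_mat2_eq_smult_one)
  txt \<open>The Frobenius map permutes the roots \<open>l\<close> and \<open>l\<inverse>\<close> of \<open>x\<^sup>2 - t x + 1\<close>.\<close>
  have "(l * l - t * l + 1) ^ q = l ^ q * l ^ q - t * l ^ q + 1"
    using \<open>t ^ q = t\<close> by (simp add: power_q_add power_q_diff power_mult_distrib)
  hence "l ^ q * l ^ q - t * l ^ q + 1 = 0" using root by (simp add: zero_power)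
  moreover have "t = l + inverse l" using root unfolding t_def by (rule trace_mat2_eq_eigenvalue_add_inverse)
  ultimately have "(l ^ q - l) * (l ^ q - inverse l) = 0" using \<open>l \<noteq> 0\<close> by (simp add: algebra_simps)
  hence "l ^ q = l \<or> l ^ q = inverse l" by simp
  thus ?thesis
  proof
    assume "l ^ q = l"
    hence "l ^ (q - 1) * l = 1 * l" using power_minus_mult[of q l] by simp
    hence "l ^ (q - 1) = 1" using \<open>l \<noteq> 0\<close> by (simp only: mult_cancel_right) simp
    thus ?thesis using power_q[of "q - 1"] by (simp add: power_inverse)
  next
    define h where "h = (q + 1) div 2"
    assume "l ^ q = inverse l"
    hence "l ^ (q + 1) = 1" using \<open>l \<noteq> 0\<close> by simp
    moreover have "q + 1 = 2 * h" using q_eq_4k_plus_3 by (simp add: h_def)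
    ultimately have "l ^ h * l ^ h = 1" by (metis mult_2 power_add)
    hence "l ^ h = 1 \<or> l ^ h = - 1" by (simp add: square_eq_1_iff)
    moreover from this have "A ^ h = smult_mat2 (l ^ h) 1" by (auto simp: power_q power_inverse)
    ultimately show ?thesis by (auto simp: h_def smult_mat2_minus_1)
  qed
qed

lemma act_fixed_point_free:
  assumes "A \<in> SL2_Fq" and "e = 1 \<or> e = - 1" and "trace_mat2 A \<noteq> 0"
    and "e = 1 \<Longrightarrow> trace_mat2 A * trace_mat2 A \<noteq> 1" and "act e A P = P"
  shows "P = 0"
proof (rule ccontr)
  define t where "t = trace_mat2 A"
  assume "P \<noteq> 0"
  hence "t = e * (t * (t * t))"
    using trace_eq_if_act_fixes[of A e P] assms by (auto simp: SL2_Fq_def t_def power3_eq_cube)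
  show False
    using assms(2)
  proof
    assume "e = 1"
    hence "t * (t * t - 1) = 0" using \<open>t = e * (t * (t * t))\<close> by (simp add: algebra_simps)
    thus False using assms(3,4) \<open>e = 1\<close> by (simp add: t_def)
  next
    assume "e = - 1"
    hence "t = - (t * (t * t))" using \<open>t = e * (t * (t * t))\<close> by simp
    hence "t + t * (t * t) = 0" by (simp add: eq_neg_iff_add_eq_0)
    hence "t * (t * t + 1) = 0" by (simp add: algebra_simps)
    hence "t * t = - 1" using assms(3) by (simp add: t_def add_eq_0_iff2)
    thus False using minus_one_not_square_in_Fq trace_mat_Fq assms(1) by (auto simp: SL2_Fq_def t_def)
  qed
qed

lemma act_funpow_3_eq_id:
  assumes "A \<in> SL2_Fq" and "trace_mat2 A * trace_mat2 A = 1"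
  shows "act 1 A ^^ 3 = id"
proof -
  have "A ^ 3 = smult_mat2 (- trace_mat2 A) 1"
    using assms by (intro power3_mat2_if_trace_square_one) (simp_all add: SL2_Fq_def)
  moreover have "- trace_mat2 A = 1 \<or> - trace_mat2 A = - 1" using assms(2) by (auto simp: square_eq_1_iff)
  ultimately show ?thesis using act_smult_one by (simp add: act_funpow)
qed

lemma act_funpow_6_eq_id:
  assumes "A \<in> SL2_Fq" and "e = 1 \<or> e = - 1" and "trace_mat2 A * trace_mat2 A = 1"
  shows "act e A ^^ 6 = id"
proof -
  have "A ^ 3 = smult_mat2 (- trace_mat2 A) 1"
    using assms by (intro power3_mat2_if_trace_square_one) (simp_all add: SL2_Fq_def)
  moreover have "A ^ 6 = A ^ 3 * A ^ 3" by (simp flip: power_add)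
  ultimately have "A ^ 6 = 1" using assms(3) by (simp add: smult_mat2_mult_left smult_mat2_mult_right)
  thus ?thesis using assms(2) by (auto simp: act_funpow act_one_one)
qed

lemma act_funpow_2_eq_id:
  assumes "A \<in> SL2_Fq" and "e = 1 \<or> e = - 1" and "trace_mat2 A = 0"
  shows "act e A ^^ 2 = id"
proof -
  have "A * A = - 1"
    using assms by (intro square_mat2_if_trace_zero) (simp_all add: SL2_Fq_def)
  hence "A ^ 2 = smult_mat2 (- 1) 1" by (simp add: power2_eq_square smult_mat2_minus_1)
  thus ?thesis using assms(2) act_smult_one[of "- 1"] by (auto simp: act_funpow)
qed

lemma act_funpow_eq_id_if_trace_square_neq_1:
  assumes "A \<in> SL2_Fq" and "e = 1 \<or> e = - 1" and "trace_mat2 A * trace_mat2 A \<noteq> 1"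
  shows "act e A ^^ (q - 1) = id \<or> act e A ^^ ((q + 1) div 2) = id"
proof -
  have "e ^ (q - 1) = 1" "e ^ ((q + 1) div 2) = 1"
    using assms(2) even_q_minus_1 even_half_q_plus_1 by auto
  thus ?thesis using SL2_Fq_power_eq_pm_one[OF assms(1,3)] act_smult_one[of "- 1"]
    by (auto simp: act_funpow act_one_one smult_mat2_minus_1)
qed

lemma semidirect_product_pow_target_eq_one:
  assumes x: "x \<in> carrier semidirect_product"
  shows "\<exists>d \<in> {6, 9, q - 1, (q + 1) div 2}. x [^]\<^bsub>semidirect_product\<^esub> d = \<one>\<^bsub>semidirect_product\<^esub>"
proof -
  obtain P f where "x = (P, f)" and "f \<in> act_group" using x by auto
  then obtain e A where x_eq: "x = (P, act e A)" and e: "e = 1 \<or> e = - 1" and A: "A \<in> SL2_Fq"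
    by (auto simp: act_group_def)
  define t where "t = trace_mat2 A"
  have f: "act e A \<in> act_group" using e A by (auto simp: act_group_def)
  have pow_mult_3: "x [^]\<^bsub>semidirect_product\<^esub> (p * 3) = \<one>\<^bsub>semidirect_product\<^esub>"
    if "act e A ^^ p = id" for p
    using semidirect_product_pow_mult_3_eq_one[OF mat2_triple_eq_0 x, of p] that x_eq by simp
  have fixed_point_free: "x [^]\<^bsub>semidirect_product\<^esub> n = \<one>\<^bsub>semidirect_product\<^esub>"
    if "act e A ^^ n = id" "t \<noteq> 0" "e = 1 \<Longrightarrow> t * t \<noteq> 1" for n
    using semidirect_product_pow_eq_one_if_fixed_point_free[OF f that(1)]
      act_fixed_point_free[OF A e] that(2,3) x_eq by (simp add: t_def)
  consider "e = 1" "t * t = 1" | "e = - 1" "t * t = 1" | "t = 0" | "t * t \<noteq> 1" "t \<noteq> 0"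
    using e by blast
  thus ?thesis
  proof cases
    case 1
    thus ?thesis using act_funpow_3_eq_id[OF A] pow_mult_3[of 3] by (auto simp: t_def)
  next
    case 2
    hence "x [^]\<^bsub>semidirect_product\<^esub> (6 :: nat) = \<one>\<^bsub>semidirect_product\<^esub>"
      using act_funpow_6_eq_id[OF A e] minus_one_neq_one by (intro fixed_point_free) (auto simp: t_def)
    thus ?thesis by blast
  next
    case 3
    thus ?thesis using act_funpow_2_eq_id[OF A e] pow_mult_3[of 2] by (auto simp: t_def)
  next
    case 4
    hence "act e A ^^ (q - 1) = id \<or> act e A ^^ ((q + 1) div 2) = id"
      using act_funpow_eq_id_if_trace_square_neq_1[OF A e] by (simp add: t_def)
    thus ?thesis using fixed_point_free 4 by blast
  qed
qed

lemma unipotent_in_SL2_Fq: "Mat2 1 1 0 1 \<in> SL2_Fq"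
  by (simp add: SL2_Fq_def mat_Fq_def det_mat2_def Fq_closed)

lemma six_in_elem_orders: "6 \<in> elem_orders semidirect_product"
proof (rule elem_orders_semidirect_product)
  define U :: "gf3_closure mat2" where "U = Mat2 1 1 0 1"
  show "act (- 1) U \<in> act_group" using unipotent_in_SL2_Fq by (auto simp: U_def act_group_def)
  fix n :: nat
  have "act (- 1) U ^^ n = id \<longleftrightarrow> even n \<and> 3 dvd n"
  proof
    assume "act (- 1) U ^^ n = id"
    hence "(- 1) ^ n = (1 :: gf3_closure) \<and> (U ^ n = 1 \<or> U ^ n = - 1)"
      by (intro act_eq_idD) (simp_all add: act_funpow U_def unipotent_mat2_power det_mat2_def
          flip: power_mult_distrib)
    hence "even n" and "(of_nat n :: gf3_closure) = 0"
      by (auto simp: U_def unipotent_mat2_power mat2_eq_iff minus_one_power_eq_one_iff)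
    thus "even n \<and> 3 dvd n" by (simp add: of_nat_eq_0_iff_char_dvd)
  next
    assume "even n \<and> 3 dvd n"
    hence "(- 1) ^ n = (1 :: gf3_closure)" and "U ^ n = 1"
      by (auto simp: U_def unipotent_mat2_power mat2_eq_iff of_nat_eq_0_iff_char_dvd)
    thus "act (- 1) U ^^ n = id" by (simp add: act_funpow act_one_one)
  qed
  thus "act (- 1) U ^^ n = id \<longleftrightarrow> 6 dvd n" by presburger
qed

lemma nine_in_elem_orders: "9 \<in> elem_orders semidirect_product"
proof -
  interpret group semidirect_product by (rule group_semidirect_product)
  define U :: "gf3_closure mat2" where "U = Mat2 1 1 0 1"
  define x where "x = (Mat2 0 0 0 (1 :: gf3_closure), act 1 U)"
  have "act 1 U \<in> act_group" using unipotent_in_SL2_Fq by (auto simp: U_def act_group_def)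
  moreover have "Mat2 0 0 0 1 \<in> mat_Fq" by (simp add: mat_Fq_def Fq_closed)
  ultimately have x: "x \<in> carrier semidirect_product" by (simp add: x_def)
  have "U ^ 3 = 1" by (simp add: U_def unipotent_mat2_power mat2_eq_iff)
  hence "act 1 U ^^ 3 = id" by (simp add: act_funpow act_one_one)
  hence "x [^]\<^bsub>semidirect_product\<^esub> (3 * 3 :: nat) = \<one>\<^bsub>semidirect_product\<^esub>"
    using semidirect_product_pow_mult_3_eq_one[OF mat2_triple_eq_0 x, of 3] by (simp add: x_def)
  moreover have "orbit_sum (act 1 U) (Mat2 0 0 0 1) 3 \<noteq> 0"
    by (simp add: orbit_sum_def numeral_3_eq_3 act_def U_def mat2_eq_iff mat2.map_sel) presburger
  hence "x [^]\<^bsub>semidirect_product\<^esub> (3 :: nat) \<noteq> \<one>\<^bsub>semidirect_product\<^esub>"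
    by (simp add: x_def semidirect_product_pow)
  ultimately have "ord x = 9" using ord_eq_prime_power[OF x, of 3 1] by simp
  thus ?thesis using x unfolding elem_orders_def by (metis image_eqI)
qed

lemma exists_element_of_order_q_squared_minus_1:
  obtains w :: gf3_closure where "\<And>k. w ^ k = 1 \<longleftrightarrow> (q * q - 1) dvd k"
proof -
  have "CHAR(gf3_closure) ^ (2 * \<alpha>) = q * q" by (simp add: mult_2 power_add)
  thus ?thesis using exists_primitive_Frobenius_fixed_point[where ?'a = gf3_closure, of "2 * \<alpha>"]
      exponent_ge_3 that by auto
qed

lemma exists_generator_of_Fq_units:
  obtains g where "g \<in> Fq" and "\<And>k. g ^ k = 1 \<longleftrightarrow> (q - 1) dvd k"
proof -
  obtain w :: gf3_closure where w: "\<And>k. w ^ k = 1 \<longleftrightarrow> (q * q - 1) dvd k"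
    using exists_element_of_order_q_squared_minus_1 by blast
  define g where "g = w ^ (q + 1)"
  have g_pow: "g ^ k = 1 \<longleftrightarrow> (q - 1) dvd k" for k
  proof -
    have "g ^ k = 1 \<longleftrightarrow> (q + 1) * (q - 1) dvd (q + 1) * k"
      unfolding g_def power_mult[symmetric] w q_squared_minus_1 by (simp only: mult.commute)
    thus ?thesis by (simp only: nat_mult_dvd_cancel_disj) simp
  qed
  have "g ^ q = g ^ (q - 1) * g" using power_minus_mult[of q g] by simp
  also have "\<dots> = g" using g_pow[of "q - 1"] by simp
  finally have "g \<in> Fq" by (simp add: Fq_def)
  thus ?thesis using g_pow that by blast
qed

lemma exists_element_of_order_q_plus_1:
  obtains l :: gf3_closure where "\<And>k. l ^ k = 1 \<longleftrightarrow> (q + 1) dvd k"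
proof -
  obtain w :: gf3_closure where w: "\<And>k. w ^ k = 1 \<longleftrightarrow> (q * q - 1) dvd k"
    using exists_element_of_order_q_squared_minus_1 by blast
  have "(w ^ (q - 1)) ^ k = 1 \<longleftrightarrow> (q + 1) dvd k" for k
  proof -
    have "(w ^ (q - 1)) ^ k = 1 \<longleftrightarrow> (q - 1) * (q + 1) dvd (q - 1) * k"
      unfolding power_mult[symmetric] w q_squared_minus_1 ..
    thus ?thesis using q_ge_27 by (simp only: nat_mult_dvd_cancel_disj) simp
  qed
  thus ?thesis by (rule that)
qed

lemma q_minus_1_in_elem_orders: "q - 1 \<in> elem_orders semidirect_product"
proof -
  obtain g where "g \<in> Fq" and g_pow: "\<And>k. g ^ k = 1 \<longleftrightarrow> (q - 1) dvd k"
    using exists_generator_of_Fq_units by blast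
  have "g \<noteq> 0" using g_pow[of "q - 1"] q_ge_27 by (auto simp: zero_power)
  define D where "D = Mat2 g 0 0 (inverse g)"
  have D: "D \<in> SL2_Fq"
    using \<open>g \<in> Fq\<close> \<open>g \<noteq> 0\<close> by (simp add: D_def SL2_Fq_def mat_Fq_def det_mat2_def Fq_closed)
  show ?thesis
  proof (rule elem_orders_semidirect_product)
    show "act (- 1) D \<in> act_group" using D by (auto simp: act_group_def)
    fix n
    show "act (- 1) D ^^ n = id \<longleftrightarrow> (q - 1) dvd n"
    proof
      assume "act (- 1) D ^^ n = id"
      hence "(- 1) ^ n = (1 :: gf3_closure) \<and> (D ^ n = 1 \<or> D ^ n = - 1)"
        using D by (intro act_eq_idD)
          (simp_all add: act_funpow det_mat2_power SL2_Fq_def flip: power_mult_distrib)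
      hence "even n" and "g ^ n = 1 \<or> g ^ n = - 1"
        by (auto simp: D_def diagonal_mat2_power mat2_eq_iff minus_one_power_eq_one_iff)
      moreover from this(2) have "g ^ (2 * n) = 1" by (auto simp: power_mult mult.commute[of 2])
      ultimately show "(q - 1) dvd n" using g_pow q_minus_1_dvd_if_dvd_double by blast
    next
      assume "(q - 1) dvd n"
      hence "even n" using even_q_minus_1 dvd_trans by blast
      moreover have "D ^ n = 1"
        using g_pow \<open>(q - 1) dvd n\<close> by (simp add: D_def diagonal_mat2_power mat2_eq_iff power_inverse)
      ultimately show "act (- 1) D ^^ n = id" by (simp add: act_funpow act_one_one)
    qed
  qed
qed

lemma half_q_plus_1_in_elem_orders: "(q + 1) div 2 \<in> elem_orders semidirect_product"
proof -
  obtain l :: gf3_closure where l_pow: "\<And>k. l ^ k = 1 \<longleftrightarrow> (q + 1) dvd k"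
    using exists_element_of_order_q_plus_1 by blast
  have "l \<noteq> 0" using l_pow[of "q + 1"] by auto
  have "l ^ q * l = 1" using l_pow[of "q + 1"] by (simp add: mult.commute)
  hence "l ^ q = inverse l" using \<open>l \<noteq> 0\<close> by (simp add: field_simps)
  hence "l + inverse l \<in> Fq" by (simp add: Fq_def power_q_add power_inverse add.commute)
  define C where "C = Mat2 0 (- 1) 1 (l + inverse l)"
  have C: "C \<in> SL2_Fq"
    using \<open>l + inverse l \<in> Fq\<close> by (simp add: C_def SL2_Fq_def mat_Fq_def det_mat2_def Fq_closed)
  hence det: "det_mat2 C = 1" by (simp add: SL2_Fq_def)
  have root: "l * l - trace_mat2 C * l + 1 = 0"
    using \<open>l \<noteq> 0\<close> by (simp add: C_def trace_mat2_def algebra_simps)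
  have "l * l \<noteq> 1"
  proof
    assume "l * l = 1"
    hence "(q + 1) dvd 2" using l_pow[of 2] by (simp add: power2_eq_square)
    thus False using q_ge_27 by (auto dest: dvd_imp_le)
  qed
  show ?thesis
  proof (rule elem_orders_semidirect_product)
    show "act 1 C \<in> act_group" using C by (auto simp: act_group_def)
    fix n
    have "act 1 C ^^ n = id \<longleftrightarrow> l ^ n * l ^ n = 1"
      using act_funpow_eq_id_iff_eigenvalue_pm_one[OF det root \<open>l * l \<noteq> 1\<close>]
      by (simp add: square_eq_1_iff)
    also have "\<dots> \<longleftrightarrow> (q + 1) dvd 2 * n" using l_pow[of "2 * n"] by (simp add: mult_2 power_add)
    also have "q + 1 = 2 * ((q + 1) div 2)" by simp
    finally show "act 1 C ^^ n = id \<longleftrightarrow> (q + 1) div 2 dvd n"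
      by (simp only: nat_mult_dvd_cancel_disj) simp
  qed
qed

lemma target_orders_antichain:
  assumes "d \<in> {6, 9, q - 1, (q + 1) div 2}" and "d' \<in> {6, 9, q - 1, (q + 1) div 2}"
    and "d dvd d'"
  shows "d = d'"
proof -
  define h where "h = (q + 1) div 2"
  have q_h: "q + 1 = 2 * h" using q_eq_4k_plus_3 by (simp add: h_def)
  have "3 dvd q" using exponent_ge_3 by (simp add: dvd_power)
  hence not_3_dvd: "\<not> 3 dvd q - 1" "\<not> 3 dvd h"
    using q_ge_27 q_h by presburger+
  have "\<not> h dvd q - 1"
  proof
    assume "h dvd q - 1"
    moreover have "q - 1 + 2 = 2 * h" using q_h q_ge_27 by simp
    ultimately have "h dvd 2" by (metis dvd_add_right_iff dvd_triv_right)
    thus False using q_h q_ge_27 by (auto dest: dvd_imp_le)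
  qed
  moreover have "\<not> (q - 1) dvd h" using q_h q_ge_27 by (auto dest: dvd_imp_le)
  moreover have "\<not> h dvd 6" "\<not> h dvd 9" "\<not> (q - 1) dvd 6" "\<not> (q - 1) dvd 9"
    using q_h q_ge_27 by (auto dest: dvd_imp_le)
  moreover have "\<not> 6 dvd q - 1" "\<not> 9 dvd q - 1" "\<not> 6 dvd h" "\<not> 9 dvd h"
    using not_3_dvd dvd_trans[of 3 6] dvd_trans[of 3 9] by auto
  ultimately show ?thesis using assms unfolding h_def[symmetric] by auto
qed

lemma max_orders_semidirect_product:
  "max_orders semidirect_product = {6, 9, q - 1, (q + 1) div 2}"
proof (rule max_orders_eqI)
  show "\<exists>d \<in> {6, 9, q - 1, (q + 1) div 2}. n dvd d"
    if n_mem: "n \<in> elem_orders semidirect_product" for n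
  proof -
    interpret group semidirect_product by (rule group_semidirect_product)
    obtain x where n: "n = ord x" and x: "x \<in> carrier semidirect_product"
      using n_mem unfolding elem_orders_def by (rule imageE)
    obtain d where d: "d \<in> {6, 9, q - 1, (q + 1) div 2}"
      and "x [^]\<^bsub>semidirect_product\<^esub> d = \<one>\<^bsub>semidirect_product\<^esub>"
      using semidirect_product_pow_target_eq_one[OF x] by (rule bexE)
    hence "n dvd d" using pow_eq_id[OF x] n by simp
    with d show ?thesis by (rule bexI[rotated])
  qed
  show "{6, 9, q - 1, (q + 1) div 2} \<subseteq> elem_orders semidirect_product"
    using six_in_elem_orders nine_in_elem_orders q_minus_1_in_elem_orders
      half_q_plus_1_in_elem_orders by simp
  show "d = d'" if "d \<in> {6, 9, q - 1, (q + 1) div 2}" "d' \<in> {6, 9, q - 1, (q + 1) div 2}" "d dvd d'" for d d'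
    using that by (rule target_orders_antichain)
qed

end

theorem lemma3p2:
  fixes \<alpha> q :: nat
  assumes "odd \<alpha>" and "\<alpha> \<ge> 3" and "q = 3 ^ \<alpha>"
  shows "\<exists>H :: nat monoid. group H \<and> finite (carrier H) \<and>
           O_p 3 H \<noteq> {\<one>\<^bsub>H\<^esub>} \<and>
           max_orders H = {6, 9, q - 1, (q + 1) div 2}"
proof -
  interpret odd_power_of_3 \<alpha> using assms(1,2) by unfold_locales
  obtain H :: "nat monoid" and h where H: "group H" "finite (carrier H)"
    and h: "h \<in> iso semidirect_product H"
    using finite_group_iso_nat_monoid[OF group_semidirect_product finite_semidirect_product] by blast
  have "card translation_subgroup = 3 ^ (4 * \<alpha>)"
    by (simp add: card_translation_subgroup card_mat_Fq)
  hence "O_p 3 H \<noteq> {\<one>\<^bsub>H\<^esub>}"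
    using iso_O_p_nontrivial[OF group_semidirect_product H(1) h translation_subgroup_normal _
        translation_subgroup_nontrivial] by blast
  moreover have "max_orders H = {6, 9, q - 1, (q + 1) div 2}"
    using iso_max_orders[OF group_semidirect_product H(1) h] max_orders_semidirect_product assms(3)
    by simp
  ultimately show ?thesis using H by blast
qed

end
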